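(* Let $p,d\ge 1$ be integers, let $C_0,\dots,C_{p-1}\in\mathbb{R}^{d\times d}$, and let $M\in\mathbb{R}^{pd\times pd}$ be the block companion matrix whose block rows $i=1,\dots,p-1$ have $I_d$ in block column $i+1$ and zeros elsewhere, and whose last block row is $(C_0,C_1,\dots,C_{p-1})$. Suppose there is an invertible $Q\in\mathbb{R}^{d\times d}$ such that $T_i:=Q^{-1}C_iQ$ is upper triangular for each $i$. Then the set of eigenvalues of $M$ equals $$\bigcup_{j=1}^d\left\{\lambda\in\mathbb{C}:\ \lambda^p-\sum_{k=0}^{p-1}\lambda^k (T_k)_{j,j}=0\right\}.$$
   Context: The diagonal entries $(T_k)_{1,1},\dots,(T_k)_{d,d}$ are the eigenvalues of $C_k$ listed in the order induced by $Q$. *)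

theory Defs
  imports Complex_Main "Jordan_Normal_Form.Matrix" "Jordan_Normal_Form.Char_Poly"
begin

text \<open>Block companion matrix of size (p*d) x (p*d), 0-based indices.
  Block row i < p-1 has the identity in block column i+1; the last block row
  is (C 0, C 1, ..., C (p-1)).\<close>
definition block_companion :: "nat \<Rightarrow> nat \<Rightarrow> (nat \<Rightarrow> real mat) \<Rightarrow> real mat" where
  "block_companion p d C = mat (p * d) (p * d) (\<lambda>(r, c).
     let i = r div d; a = r mod d; j = c div d; b = c mod d in
     if i < p - 1 then (if j = i + 1 \<and> a = b then 1 else 0)
     else C j $$ (a, b))"

end

theory Submission
  imports Defs
begin

text \<open>An eigenvector of the block companion matrix \<open>M\<close> for \<open>\<lambda>\<close> is forced, block row by block
  row, to be of the form \<open>(w, \<lambda> w, \<dots>, \<lambda>\<^sup>p\<^sup>-\<^sup>1 w)\<close>, and such a vector is an eigenvector exactly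
  when the last block row holds, i.e. when \<open>L(\<lambda>) w = 0\<close> for the monic matrix polynomial
  \<open>L(\<lambda>) = \<lambda>\<^sup>p I - \<Sum>\<^sub>k \<lambda>\<^sup>k C\<^sub>k\<close>. Hence the eigenvalues of \<open>M\<close> are the zeros of \<open>det L(\<lambda>)\<close>.
  Conjugation by \<open>Q\<close> turns \<open>L(\<lambda>)\<close> into \<open>\<lambda>\<^sup>p I - \<Sum>\<^sub>k \<lambda>\<^sup>k T\<^sub>k\<close> without changing the determinant,
  and this matrix is upper triangular, so its determinant is the product of its diagonal entries.\<close>

lemma sum_lessThan_mult_blocks:
  "(\<Sum>c<p * d. f c) = (\<Sum>j<p. \<Sum>b<(d::nat). f (j * d + b))"
proof -
  have "sum f {j * d..<j * d + d} = (\<Sum>b<d. f (j * d + b))" for j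
    using sum.shift_bounds_nat_ivl[of f 0 "j * d" d] by (simp add: atLeast0LessThan add.commute)
  then show ?thesis by (simp add: sum.nat_group[symmetric])
qed

lemma block_index_less: "j < p \<Longrightarrow> b < d \<Longrightarrow> j * d + b < p * (d::nat)"
proof -
  assume "j < p" "b < d"
  then have "j * d + b < Suc j * d" by simp
  also have "\<dots> \<le> p * d" using \<open>j < p\<close> by (intro mult_right_mono) auto
  finally show ?thesis .
qed

definition matrix_poly_sum :: "nat \<Rightarrow> nat \<Rightarrow> (nat \<Rightarrow> 'a :: semiring_1 mat) \<Rightarrow> 'a \<Rightarrow> 'a mat" where
  "matrix_poly_sum d n C z = mat d d (\<lambda>(a, b). \<Sum>k<n. z ^ k * C k $$ (a, b))"

definition monic_matrix_poly :: "nat \<Rightarrow> nat \<Rightarrow> (nat \<Rightarrow> 'a :: ring_1 mat) \<Rightarrow> 'a \<Rightarrow> 'a mat" where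
  "monic_matrix_poly d p C z = z ^ p \<cdot>\<^sub>m 1\<^sub>m d - matrix_poly_sum d p C z"

lemma monic_matrix_poly_eq_mat:
  "monic_matrix_poly d p C z
    = mat d d (\<lambda>(a, b). (if a = b then z ^ p else 0) - (\<Sum>k<p. z ^ k * C k $$ (a, b)))"
  by (rule eq_matI) (auto simp: monic_matrix_poly_def matrix_poly_sum_def)

lemma monic_matrix_poly_carrier: "monic_matrix_poly d p C z \<in> carrier_mat d d"
  by (simp add: monic_matrix_poly_eq_mat)

lemma monic_matrix_poly_mult_vec_index:
  fixes C :: "nat \<Rightarrow> 'a :: comm_ring_1 mat"
  assumes w: "w \<in> carrier_vec d" and C: "\<And>k. k < p \<Longrightarrow> C k \<in> carrier_mat d d" and a: "a < d"
  shows "(monic_matrix_poly d p C z *\<^sub>v w) $ a = z ^ p * w $ a - (\<Sum>k<p. z ^ k * (C k *\<^sub>v w) $ a)"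
proof -
  have "(monic_matrix_poly d p C z *\<^sub>v w) $ a
      = (\<Sum>b<d. (if a = b then z ^ p * w $ b else 0) - (\<Sum>k<p. z ^ k * (C k $$ (a, b) * w $ b)))"
    using w a by (auto simp: scalar_prod_def atLeast0LessThan monic_matrix_poly_eq_mat
        left_diff_distrib sum_distrib_right mult.assoc intro!: sum.cong)
  also have "\<dots> = z ^ p * w $ a - (\<Sum>k<p. z ^ k * (\<Sum>b<d. C k $$ (a, b) * w $ b))"
    using a by (simp add: sum_subtractf sum.swap[of _ "{..<d}"] sum_distrib_left)
  also have "\<dots> = z ^ p * w $ a - (\<Sum>k<p. z ^ k * (C k *\<^sub>v w) $ a)"
  proof -
    have "(C k *\<^sub>v w) $ a = (\<Sum>b<d. C k $$ (a, b) * w $ b)" if "k < p" for k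
      using C[OF that] w a by (simp add: scalar_prod_def atLeast0LessThan)
    then show ?thesis by simp
  qed
  finally show ?thesis .
qed

lemma matrix_poly_sum_Suc:
  "C n \<in> carrier_mat d d \<Longrightarrow>
    matrix_poly_sum d (Suc n) C z = matrix_poly_sum d n C z + z ^ n \<cdot>\<^sub>m C n"
  by (rule eq_matI) (auto simp: matrix_poly_sum_def)

lemma matrix_poly_sum_similar:
  fixes C T :: "nat \<Rightarrow> 'a :: comm_ring_1 mat"
  assumes P: "P \<in> carrier_mat d d" and Q: "Q \<in> carrier_mat d d"
    and C: "\<And>k. k < n \<Longrightarrow> C k \<in> carrier_mat d d"
    and T: "\<And>k. k < n \<Longrightarrow> T k = P * C k * Q"
  shows "P * matrix_poly_sum d n C z * Q = matrix_poly_sum d n T z"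
  using C T
proof (induction n)
  case 0
  have "matrix_poly_sum d 0 C z = 0\<^sub>m d d" "matrix_poly_sum d 0 T z = 0\<^sub>m d d"
    by (auto simp: matrix_poly_sum_def)
  then show ?case using P Q by simp
next
  case (Suc n)
  have Cn: "C n \<in> carrier_mat d d" and Tn: "T n = P * C n * Q" using Suc.prems by auto
  have Tn_carrier: "T n \<in> carrier_mat d d" using Tn P Q Cn by simp
  have S: "matrix_poly_sum d n C z \<in> carrier_mat d d" by (simp add: matrix_poly_sum_def)
  have "P * matrix_poly_sum d (Suc n) C z * Q
      = P * matrix_poly_sum d n C z * Q + z ^ n \<cdot>\<^sub>m (P * C n * Q)"
    using P Q Cn S by (simp add: matrix_poly_sum_Suc mult_add_distrib_mat[of _ d d]
        add_mult_distrib_mat[of _ d d] mult_smult_distrib[of _ d d] mult_smult_assoc_mat[of _ d d])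
  also have "\<dots> = matrix_poly_sum d (Suc n) T z"
    using Suc Tn Tn_carrier by (simp add: matrix_poly_sum_Suc)
  finally show ?case .
qed

lemma monic_matrix_poly_similar:
  fixes C T :: "nat \<Rightarrow> 'a :: comm_ring_1 mat"
  assumes P: "P \<in> carrier_mat d d" and Q: "Q \<in> carrier_mat d d" and PQ: "P * Q = 1\<^sub>m d"
    and C: "\<And>k. k < p \<Longrightarrow> C k \<in> carrier_mat d d"
    and T: "\<And>k. k < p \<Longrightarrow> T k = P * C k * Q"
  shows "P * monic_matrix_poly d p C z * Q = monic_matrix_poly d p T z"
proof -
  have S: "matrix_poly_sum d p C z \<in> carrier_mat d d" by (simp add: matrix_poly_sum_def)
  have "P * (z ^ p \<cdot>\<^sub>m 1\<^sub>m d - matrix_poly_sum d p C z) = z ^ p \<cdot>\<^sub>m P - P * matrix_poly_sum d p C z"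
    using mult_minus_distrib_mat[OF P smult_carrier_mat[OF one_carrier_mat] S]
      mult_smult_distrib[OF P one_carrier_mat] P by simp
  moreover have "(z ^ p \<cdot>\<^sub>m P - P * matrix_poly_sum d p C z) * Q
      = z ^ p \<cdot>\<^sub>m (P * Q) - P * matrix_poly_sum d p C z * Q"
    using P Q S by (simp add: minus_mult_distrib_mat[of _ d d] mult_smult_assoc_mat[of _ d d])
  ultimately show ?thesis
    using PQ matrix_poly_sum_similar[OF P Q C T] by (simp add: monic_matrix_poly_def)
qed

lemma det_monic_matrix_poly_upper_triangular:
  fixes T :: "nat \<Rightarrow> 'a :: comm_ring_1 mat"
  assumes T: "\<And>k. k < p \<Longrightarrow> T k \<in> carrier_mat d d"
    and ut: "\<And>k. k < p \<Longrightarrow> upper_triangular (T k)"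
  shows "det (monic_matrix_poly d p T z) = (\<Prod>j<d. z ^ p - (\<Sum>k<p. z ^ k * T k $$ (j, j)))"
proof -
  have "upper_triangular (monic_matrix_poly d p T z)"
  proof (unfold upper_triangular_def, intro allI impI)
    fix i j assume "i < dim_row (monic_matrix_poly d p T z)" "j < i"
    moreover have "T k $$ (i, j) = 0" if "k < p" for k
      using ut[OF that] T[OF that] \<open>j < i\<close> calculation unfolding upper_triangular_def
      by (simp add: monic_matrix_poly_eq_mat)
    ultimately show "monic_matrix_poly d p T z $$ (i, j) = 0" by (simp add: monic_matrix_poly_eq_mat)
  qed
  then show ?thesis
    by (simp add: det_upper_triangular[of _ d] prod_list_diag_prod monic_matrix_poly_eq_mat atLeast0LessThan)
qed

lemma det_monic_matrix_poly_similar: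
  fixes C T :: "nat \<Rightarrow> 'a :: comm_ring_1 mat"
  assumes P: "P \<in> carrier_mat d d" and Q: "Q \<in> carrier_mat d d"
    and PQ: "P * Q = 1\<^sub>m d" and QP: "Q * P = 1\<^sub>m d"
    and C: "\<And>k. k < p \<Longrightarrow> C k \<in> carrier_mat d d"
    and T: "\<And>k. k < p \<Longrightarrow> T k = P * C k * Q"
  shows "det (monic_matrix_poly d p T z) = det (monic_matrix_poly d p C z)"
proof (rule det_similar, rule similar_matI)
  show "monic_matrix_poly d p T z = P * monic_matrix_poly d p C z * Q"
    using monic_matrix_poly_similar[OF P Q PQ C T] by simp
qed (use P Q PQ QP monic_matrix_poly_carrier in auto)

lemma det_monic_matrix_poly_of_real_similar:
  fixes C T :: "nat \<Rightarrow> real mat" and z :: "'a :: {comm_ring_1, real_algebra_1}"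
  assumes P: "P \<in> carrier_mat d d" and Q: "Q \<in> carrier_mat d d"
    and PQ: "P * Q = 1\<^sub>m d" and QP: "Q * P = 1\<^sub>m d"
    and C: "\<And>k. k < p \<Longrightarrow> C k \<in> carrier_mat d d"
    and T: "\<And>k. k < p \<Longrightarrow> T k = P * C k * Q"
  shows "det (monic_matrix_poly d p (\<lambda>k. map_mat of_real (T k)) z)
    = det (monic_matrix_poly d p (\<lambda>k. map_mat of_real (C k)) z)"
proof -
  have "map_mat of_real P * map_mat of_real Q = (1\<^sub>m d :: 'a mat)"
    by (simp add: of_real_hom.mat_hom_mult[OF P Q, symmetric] PQ of_real_hom.mat_hom_one)
  moreover have "map_mat of_real Q * map_mat of_real P = (1\<^sub>m d :: 'a mat)"
    by (simp add: of_real_hom.mat_hom_mult[OF Q P, symmetric] QP of_real_hom.mat_hom_one)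
  moreover have "map_mat of_real (T k) = map_mat of_real P * map_mat of_real (C k) * map_mat of_real Q"
    if "k < p" for k
    using T[OF that] C[OF that] P Q by (simp add: of_real_hom.mat_hom_mult[of _ d d _ d])
  ultimately show ?thesis
    using P Q C
    by (intro det_monic_matrix_poly_similar[where P = "map_mat of_real P" and Q = "map_mat of_real Q"]) auto
qed

lemma upper_triangular_map_mat:
  "A \<in> carrier_mat n n \<Longrightarrow> upper_triangular A \<Longrightarrow> f 0 = 0 \<Longrightarrow> upper_triangular (map_mat f A)"
  by (auto simp: upper_triangular_def)

lemma det_monic_matrix_poly_of_real_upper_triangular:
  fixes T :: "nat \<Rightarrow> real mat" and z :: "'a :: {comm_ring_1, real_algebra_1}"
  assumes T: "\<And>k. k < p \<Longrightarrow> T k \<in> carrier_mat d d"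
    and ut: "\<And>k. k < p \<Longrightarrow> upper_triangular (T k)"
  shows "det (monic_matrix_poly d p (\<lambda>k. map_mat of_real (T k)) z)
    = (\<Prod>j<d. z ^ p - (\<Sum>k<p. z ^ k * of_real (T k $$ (j, j))))"
proof -
  have "det (monic_matrix_poly d p (\<lambda>k. map_mat of_real (T k)) z)
      = (\<Prod>j<d. z ^ p - (\<Sum>k<p. z ^ k * map_mat of_real (T k) $$ (j, j)))"
    by (rule det_monic_matrix_poly_upper_triangular)
      (use T upper_triangular_map_mat[OF T ut, where f = of_real] in auto)
  also have "\<dots> = (\<Prod>j<d. z ^ p - (\<Sum>k<p. z ^ k * of_real (T k $$ (j, j))))"
  proof -
    have "map_mat of_real (T k) $$ (j, j) = of_real (T k $$ (j, j))" if "k < p" "j < d" for k j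
      using T[OF that(1)] that(2) by simp
    then show ?thesis by (intro prod.cong sum.cong arg_cong2[where f = "(-)"] arg_cong2[where f = "(*)"] refl) auto
  qed
  finally show ?thesis .
qed

lemma block_companion_upper_row:
  fixes v :: "'a :: real_algebra_1 vec"
  assumes v: "v \<in> carrier_vec (p * d)" and r: "r < p * d" and upper: "r div d < p - 1"
  shows "(map_mat of_real (block_companion p d C) *\<^sub>v v) $ r = v $ (r + d)"
proof -
  have d: "0 < d" using r by (cases d) auto
  have rd: "r + d < p * d"
    using block_index_less[of "r div d + 1" p "r mod d" d] upper d by (simp add: algebra_simps)
  have row: "block_companion p d C $$ (r, c) = (if c = r + d then 1 else 0)" if c: "c < p * d" for c
  proof -
    have "(c div d = r div d + 1 \<and> r mod d = c mod d) \<longleftrightarrow> c = r + d"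
      using d by (metis add.commute div_mult_mod_eq mod_add_self2 div_add_self2 less_not_refl)
    then show ?thesis using r c upper by (simp add: block_companion_def Let_def)
  qed
  have "(map_mat of_real (block_companion p d C) *\<^sub>v v) $ r
      = (\<Sum>c<p * d. of_real (block_companion p d C $$ (r, c)) * v $ c)"
    using v r by (simp add: block_companion_def scalar_prod_def atLeast0LessThan)
  also have "\<dots> = (\<Sum>c<p * d. if c = r + d then v $ c else 0)"
    using row by (intro sum.cong) auto
  also have "\<dots> = v $ (r + d)" using rd by simp
  finally show ?thesis .
qed

lemma block_companion_last_row:
  fixes v :: "'a :: real_algebra_1 vec"
  assumes v: "v \<in> carrier_vec (p * d)" and r: "r < p * d" and last: "\<not> r div d < p - 1"
  shows "(map_mat of_real (block_companion p d C) *\<^sub>v v) $ r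
    = (\<Sum>j<p. \<Sum>b<d. of_real (C j $$ (r mod d, b)) * v $ (j * d + b))"
proof -
  have d: "0 < d" using r by (cases d) auto
  have "(map_mat of_real (block_companion p d C) *\<^sub>v v) $ r
      = (\<Sum>c<p * d. of_real (block_companion p d C $$ (r, c)) * v $ c)"
    using v r by (simp add: block_companion_def scalar_prod_def atLeast0LessThan)
  also have "\<dots> = (\<Sum>j<p. \<Sum>b<d. of_real (block_companion p d C $$ (r, j * d + b)) * v $ (j * d + b))"
    by (rule sum_lessThan_mult_blocks)
  also have "\<dots> = (\<Sum>j<p. \<Sum>b<d. of_real (C j $$ (r mod d, b)) * v $ (j * d + b))"
    using r last d block_index_less[of _ p _ d] by (intro sum.cong refl) (simp add: block_companion_def Let_def)
  finally show ?thesis .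
qed

definition power_stack :: "nat \<Rightarrow> nat \<Rightarrow> 'a :: semiring_1 \<Rightarrow> 'a vec \<Rightarrow> 'a vec" where
  "power_stack p d z w = vec (p * d) (\<lambda>r. z ^ (r div d) * w $ (r mod d))"

lemma dim_power_stack [simp]: "dim_vec (power_stack p d z w) = p * d"
  by (simp add: power_stack_def)

lemma power_stack_carrier [simp]: "power_stack p d z w \<in> carrier_vec (p * d)"
  by (simp add: power_stack_def)

lemma power_stack_index: "r < p * d \<Longrightarrow> power_stack p d z w $ r = z ^ (r div d) * w $ (r mod d)"
  by (simp add: power_stack_def)

lemma power_stack_eq_zero_iff:
  assumes p: "1 \<le> p" and w: "w \<in> carrier_vec d"
  shows "power_stack p d z w = 0\<^sub>v (p * d) \<longleftrightarrow> w = 0\<^sub>v d"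
proof
  assume stack: "power_stack p d z w = 0\<^sub>v (p * d)"
  show "w = 0\<^sub>v d"
  proof (rule eq_vecI)
    fix a assume "a < dim_vec (0\<^sub>v d :: 'a vec)"
    then have a: "a < d" by simp
    then have "a < p * d" using block_index_less[of 0 p a d] p by simp
    then show "w $ a = 0\<^sub>v d $ a"
      using arg_cong[OF stack, of "\<lambda>v. v $ a"] a by (simp add: power_stack_def)
  qed (use w in simp)
next
  assume zero: "w = 0\<^sub>v d"
  show "power_stack p d z w = 0\<^sub>v (p * d)"
  proof (rule eq_vecI)
    fix r assume "r < dim_vec (0\<^sub>v (p * d) :: 'a vec)"
    then have "r < p * d" by simp
    moreover from this have "r mod d < d" by (cases d) auto
    ultimately show "power_stack p d z w $ r = 0\<^sub>v (p * d) $ r"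
      by (simp add: power_stack_def zero)
  qed simp
qed

lemma block_companion_mult_power_stack_upper:
  fixes z :: "'a :: real_algebra_1"
  assumes r: "r < p * d" and upper: "r div d < p - 1"
  shows "(map_mat of_real (block_companion p d C) *\<^sub>v power_stack p d z w) $ r
    = z * power_stack p d z w $ r"
proof -
  have d: "0 < d" using r by (cases d) auto
  have "r + d = (r div d + 1) * d + r mod d" by (simp add: algebra_simps)
  moreover have "(r div d + 1) * d + r mod d < p * d"
    using block_index_less[of "r div d + 1" p "r mod d" d] upper d by simp
  ultimately have rd: "r + d < p * d" "(r + d) div d = r div d + 1" "(r + d) mod d = r mod d"
    using d by auto
  then show ?thesis
    using block_companion_upper_row[OF power_stack_carrier r upper] r by (simp add: power_stack_def mult.assoc)
qed

lemma block_companion_mult_power_stack_last: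
  fixes z :: "'a :: {comm_ring_1, real_algebra_1}"
  assumes w: "w \<in> carrier_vec d"
    and C: "\<And>k. k < Suc q \<Longrightarrow> C k \<in> carrier_mat d d" and a: "a < d"
  shows "(map_mat of_real (block_companion (Suc q) d C) *\<^sub>v power_stack (Suc q) d z w) $ (q * d + a)
    = z * power_stack (Suc q) d z w $ (q * d + a)
      - (monic_matrix_poly d (Suc q) (\<lambda>k. map_mat of_real (C k)) z *\<^sub>v w) $ a"
proof -
  have r: "q * d + a < Suc q * d" using a by simp
  have rd: "(q * d + a) div d = q" "(q * d + a) mod d = a" using a by auto
  have "(map_mat of_real (block_companion (Suc q) d C) *\<^sub>v power_stack (Suc q) d z w) $ (q * d + a)
      = (\<Sum>j<Suc q. \<Sum>b<d. of_real (C j $$ (a, b)) * (z ^ j * w $ b))"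
    using block_companion_last_row[OF power_stack_carrier r] rd block_index_less[of _ "Suc q" _ d]
    by (simp add: power_stack_index)
  also have "\<dots> = (\<Sum>j<Suc q. z ^ j * (map_mat of_real (C j) *\<^sub>v w) $ a)"
  proof (intro sum.cong refl)
    fix j assume "j \<in> {..<Suc q}"
    then show "(\<Sum>b<d. of_real (C j $$ (a, b)) * (z ^ j * w $ b))
        = z ^ j * (map_mat of_real (C j) *\<^sub>v w) $ a"
      using C[of j] w a by (simp add: scalar_prod_def atLeast0LessThan sum_distrib_left mult_ac)
  qed
  also have "\<dots> = z ^ Suc q * w $ a
      - (monic_matrix_poly d (Suc q) (\<lambda>k. map_mat of_real (C k)) z *\<^sub>v w) $ a"
    by (subst monic_matrix_poly_mult_vec_index[OF w _ a]) (simp_all add: C)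
  also have "z ^ Suc q * w $ a = z * power_stack (Suc q) d z w $ (q * d + a)"
    using r rd by (simp add: power_stack_index mult.assoc)
  finally show ?thesis .
qed

lemma block_companion_power_stack_eigen_iff:
  fixes z :: "'a :: {comm_ring_1, real_algebra_1}"
  assumes p: "1 \<le> p" and w: "w \<in> carrier_vec d"
    and C: "\<And>k. k < p \<Longrightarrow> C k \<in> carrier_mat d d"
  shows "map_mat of_real (block_companion p d C) *\<^sub>v power_stack p d z w = z \<cdot>\<^sub>v power_stack p d z w
    \<longleftrightarrow> monic_matrix_poly d p (\<lambda>k. map_mat of_real (C k)) z *\<^sub>v w = 0\<^sub>v d"
    (is "?M *\<^sub>v ?v = z \<cdot>\<^sub>v ?v \<longleftrightarrow> ?L *\<^sub>v w = _")
proof -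
  obtain q where q: "p = Suc q" using p by (cases p) auto
  have last: "(?M *\<^sub>v ?v) $ (q * d + a) = (z \<cdot>\<^sub>v ?v) $ (q * d + a) - (?L *\<^sub>v w) $ a"
    if "a < d" for a
    using block_companion_mult_power_stack_last[OF w C[unfolded q] that] that by (simp add: q)
  show ?thesis
  proof
    assume eigen: "?M *\<^sub>v ?v = z \<cdot>\<^sub>v ?v"
    show "?L *\<^sub>v w = 0\<^sub>v d"
    proof (rule eq_vecI)
      fix a assume "a < dim_vec (0\<^sub>v d :: 'a vec)"
      then have a: "a < d" by simp
      show "(?L *\<^sub>v w) $ a = 0\<^sub>v d $ a" using last[OF a] a by (simp add: eigen)
    qed (simp add: monic_matrix_poly_eq_mat)
  next
    assume kernel: "?L *\<^sub>v w = 0\<^sub>v d"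
    show "?M *\<^sub>v ?v = z \<cdot>\<^sub>v ?v"
    proof (rule eq_vecI)
      fix r assume "r < dim_vec (z \<cdot>\<^sub>v ?v)"
      then have r: "r < p * d" by simp
      then have d: "0 < d" by (cases d) auto
      show "(?M *\<^sub>v ?v) $ r = (z \<cdot>\<^sub>v ?v) $ r"
      proof (cases "r div d < q")
        case True
        then show ?thesis using block_companion_mult_power_stack_upper[OF r] r q by simp
      next
        case False
        then have "r div d = q" using less_mult_imp_div_less[OF r] q by simp
        then have r_last: "q * d + r mod d = r" by (metis div_mult_mod_eq)
        have "(?L *\<^sub>v w) $ (r mod d) = 0" using kernel d by simp
        then show ?thesis using last[of "r mod d", unfolded r_last] d by simp
      qed
    qed (simp add: block_companion_def)
  qed
qed

lemma block_companion_eigenvector_eq_power_stack: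
  fixes z :: "'a :: real_algebra_1"
  assumes v: "v \<in> carrier_vec (p * d)"
    and eigen: "map_mat of_real (block_companion p d C) *\<^sub>v v = z \<cdot>\<^sub>v v"
  shows "v = power_stack p d z (vec d (\<lambda>a. v $ a))"
proof -
  have blocks: "v $ (i * d + a) = z ^ i * v $ a" if "i < p" "a < d" for i a
    using that
  proof (induction i)
    case (Suc i)
    have r: "i * d + a < p * d" using block_index_less[of i p a d] Suc.prems by simp
    have upper: "(i * d + a) div d < p - 1" using Suc.prems by simp
    have "v $ (Suc i * d + a) = (map_mat of_real (block_companion p d C) *\<^sub>v v) $ (i * d + a)"
      using block_companion_upper_row[OF v r upper] by (simp add: algebra_simps)
    also have "\<dots> = z * v $ (i * d + a)" using eigen r v by simp
    finally show ?case using Suc by (simp add: mult.assoc)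
  qed simp
  show ?thesis
  proof (rule eq_vecI)
    fix r assume "r < dim_vec (power_stack p d z (vec d (\<lambda>a. v $ a)))"
    then have r: "r < p * d" by simp
    then have "0 < d" by (cases d) auto
    then show "v $ r = power_stack p d z (vec d (\<lambda>a. v $ a)) $ r"
      using blocks[of "r div d" "r mod d"] less_mult_imp_div_less[OF r] r by (simp add: power_stack_def)
  qed (use v in simp)
qed

lemma eigenvalue_block_companion_iff_det:
  fixes z :: "'a :: {idom, real_algebra_1}"
  assumes p: "1 \<le> p" and C: "\<And>k. k < p \<Longrightarrow> C k \<in> carrier_mat d d"
  shows "eigenvalue (map_mat of_real (block_companion p d C)) z
    \<longleftrightarrow> det (monic_matrix_poly d p (\<lambda>k. map_mat of_real (C k)) z) = 0"
    (is "eigenvalue ?M z \<longleftrightarrow> det ?L = 0")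
proof -
  have dim: "dim_row ?M = p * d" by (simp add: block_companion_def)
  have stack_iff: "eigenvector ?M (power_stack p d z w) z \<longleftrightarrow> w \<noteq> 0\<^sub>v d \<and> ?L *\<^sub>v w = 0\<^sub>v d"
    if w: "w \<in> carrier_vec d" for w
    unfolding eigenvector_def dim
    using power_stack_eq_zero_iff[OF p w] block_companion_power_stack_eigen_iff[where C = C, OF p w C]
    by simp
  have "eigenvalue ?M z \<longleftrightarrow> (\<exists>w. w \<in> carrier_vec d \<and> w \<noteq> 0\<^sub>v d \<and> ?L *\<^sub>v w = 0\<^sub>v d)"
  proof
    assume "eigenvalue ?M z"
    then obtain v where v: "eigenvector ?M v z" unfolding eigenvalue_def by blast
    define w where "w = vec d (\<lambda>a. v $ a)"
    have w: "w \<in> carrier_vec d" by (simp add: w_def)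
    have "v = power_stack p d z w"
      using v unfolding w_def eigenvector_def dim by (intro block_companion_eigenvector_eq_power_stack) auto
    with v stack_iff[OF w] show "\<exists>w. w \<in> carrier_vec d \<and> w \<noteq> 0\<^sub>v d \<and> ?L *\<^sub>v w = 0\<^sub>v d"
      using w by blast
  next
    assume "\<exists>w. w \<in> carrier_vec d \<and> w \<noteq> 0\<^sub>v d \<and> ?L *\<^sub>v w = 0\<^sub>v d"
    then show "eigenvalue ?M z" unfolding eigenvalue_def using stack_iff by blast
  qed
  also have "\<dots> \<longleftrightarrow> det ?L = 0"
    by (rule det_0_iff_vec_prod_zero[OF monic_matrix_poly_carrier, symmetric])
  finally show ?thesis .
qed

theorem corollary2p7:
  fixes p d :: nat and C T :: "nat \<Rightarrow> real mat" and Q Qi :: "real mat"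
  assumes "p \<ge> 1" and "d \<ge> 1"
    and "\<And>k. k < p \<Longrightarrow> C k \<in> carrier_mat d d"
    and "Q \<in> carrier_mat d d" and "Qi \<in> carrier_mat d d"
    and "Qi * Q = 1\<^sub>m d" and "Q * Qi = 1\<^sub>m d"
    and "\<And>k. k < p \<Longrightarrow> T k = Qi * C k * Q"
    and "\<And>k. k < p \<Longrightarrow> upper_triangular (T k)"
  shows "{z::complex. eigenvalue (map_mat complex_of_real (block_companion p d C)) z}
       = (\<Union>j<d. {z::complex. z ^ p - (\<Sum>k<p. z ^ k * complex_of_real (T k $$ (j, j))) = 0})"
proof (rule Set.set_eqI)
  note p = assms(1) and C = assms(3)
  let ?cr = "map_mat complex_of_real"
  fix z :: complex
  have T: "T k \<in> carrier_mat d d" if "k < p" for k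
    using assms(8)[OF that] C[OF that] assms(4,5) by simp
  have "eigenvalue (?cr (block_companion p d C)) z
      \<longleftrightarrow> det (monic_matrix_poly d p (\<lambda>k. ?cr (C k)) z) = 0"
    by (rule eigenvalue_block_companion_iff_det[where C = C, OF p C])
  also have "\<dots> \<longleftrightarrow> det (monic_matrix_poly d p (\<lambda>k. ?cr (T k)) z) = 0"
    by (simp only: det_monic_matrix_poly_of_real_similar[where p = p and C = C and T = T, OF assms(5,4,6,7) C assms(8)])
  also have "\<dots> \<longleftrightarrow> (\<Prod>j<d. z ^ p - (\<Sum>k<p. z ^ k * complex_of_real (T k $$ (j, j)))) = 0"
    by (simp only: det_monic_matrix_poly_of_real_upper_triangular[where p = p and T = T, OF T assms(9)])
  also have "\<dots> \<longleftrightarrow> (\<exists>j\<in>{..<d}. z ^ p - (\<Sum>k<p. z ^ k * complex_of_real (T k $$ (j, j))) = 0)"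
    by (rule prod_zero_iff) simp
  finally show "z \<in> {z. eigenvalue (?cr (block_companion p d C)) z}
      \<longleftrightarrow> z \<in> (\<Union>j<d. {z. z ^ p - (\<Sum>k<p. z ^ k * complex_of_real (T k $$ (j, j))) = 0})"
    by (simp only: mem_Collect_eq UN_iff)
qed

end
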